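(* Let $a_1,\dots,a_{n-1}$, $b_1,\dots,b_m$ and $c_1,\dots,c_m$ be quasi-periodic functions. Then $$\mathcal{R}_n\left(a_1|\cdots|a_{n-1}\,\Big|\,\sum_{k=1}^m\mathcal{R}_2(b_k|c_k)\right)=\sum_{k=1}^m\mathcal{R}_{n+1}(a_1|\cdots|a_{n-1}|b_k|c_k).$$
   Context: For quasi-periodic $h$, $M(h)=\lim_{T\to\infty}\frac1{2T}\int_{-T}^Th(t)dt$. Notation: $(f|g)_t:=f(t)\int_0^tg(\tau)d\tau$. The renormalisation operators are defined inductively: $\mathcal{R}_1a_1:=a_1$; $\mathcal{R}_2(a_1|a_2)_t:=a_1(t)\int_0^t(a_2(\tau)-M(a_2))d\tau$; and for $n>2$, $\mathcal{R}_n(a_1|\cdots|a_n)_t:=\left(a_1\,\big|\,\mathcal{R}_{n-1}(a_2|\cdots|a_n)-M(\mathcal{R}_{n-1}(a_2|\cdots|a_n))\right)_t$. *)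

theory Defs
  imports "HOL-Analysis.Analysis"
begin

definition quasi_periodic :: "(real \<Rightarrow> complex) \<Rightarrow> bool" where
  "quasi_periodic h \<longleftrightarrow>
     (\<exists>S::real set. \<exists>coef::real \<Rightarrow> complex. finite S \<and>
        (\<forall>t. h t = (\<Sum>\<omega>\<in>S. coef \<omega> * exp (\<i> * complex_of_real (\<omega> * t)))))"

definition mean :: "(real \<Rightarrow> complex) \<Rightarrow> complex" where
  "mean h = Lim at_top (\<lambda>T::real. (1 / (2 * complex_of_real T)) * (LBINT t=-T..T. h t))"

text \<open>Renormalisation operator R_n acting on the list [a_1,...,a_n] (n = length of the list).
  The oriented integral \<integral>_0^t is the interval Lebesgue integral (negative for t < 0).\<close>
fun renorm :: "(real \<Rightarrow> complex) list \<Rightarrow> real \<Rightarrow> complex" where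
  "renorm [] = (\<lambda>t. 0)"
| "renorm [a] = a"
| "renorm (a # b # as) =
     (\<lambda>t. a t * (LBINT \<tau>=0..t. renorm (b # as) \<tau> - mean (renorm (b # as))))"

end

theory Submission
  imports Defs "HOL-Real_Asymp.Real_Asymp"
begin

(* A quasi-periodic function is a finite sum of waves exp(i w t), and sums and products of
   such sums are again such sums. The time average over [-T, T] of a wave tends to 1 for w = 0
   and to 0 otherwise, so the mean of a quasi-periodic function exists, equals its
   zero-frequency coefficient, and is additive. Subtracting the mean removes exactly that
   coefficient, so the primitive of the centred function is again a finite sum of waves.
   Hence R_n maps quasi-periodic arguments to a quasi-periodic function, and induction on the
   number of arguments shows that R_n is additive in its last argument. The corollary follows
   because R_n(a_1|...|a_(n-1)|R_2(b|c)) = R_(n+1)(a_1|...|a_(n-1)|b|c) straight from the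
   recursive definition. *)

definition wave :: "real \<Rightarrow> real \<Rightarrow> complex" where
  "wave \<omega> t = exp (\<i> * complex_of_real (\<omega> * t))"

lemma wave_0 [simp]: "wave 0 t = 1"
  by (simp add: wave_def)

lemma wave_at_0 [simp]: "wave \<omega> 0 = 1"
  by (simp add: wave_def)

lemma wave_add: "wave (\<omega> + \<eta>) t = wave \<omega> t * wave \<eta> t"
  by (simp add: wave_def distrib_right distrib_left exp_add)

lemma norm_wave [simp]: "norm (wave \<omega> t) = 1"
  unfolding wave_def by (rule norm_exp_i_times)

lemma continuous_on_wave: "continuous_on A (wave \<omega>)"
  unfolding wave_def by (intro continuous_intros)

lemma wave_has_vector_derivative:
  assumes "\<omega> \<noteq> 0"
  shows "((\<lambda>t. wave \<omega> t / (\<i> * complex_of_real \<omega>)) has_vector_derivative wave \<omega> t) (at t)"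
proof -
  have "((\<lambda>z. exp (\<i> * \<omega> * z) / (\<i> * \<omega>)) has_field_derivative exp (\<i> * \<omega> * t)) (at (of_real t))"
    using assms by (auto intro!: derivative_eq_intros)
  from has_vector_derivative_real_field[OF this] show ?thesis
    by (simp add: wave_def mult.assoc)
qed

lemma interval_integral_wave:
  assumes "\<omega> \<noteq> 0"
  shows "(LBINT t=ereal a..ereal b. wave \<omega> t)
    = (wave \<omega> b - wave \<omega> a) / (\<i> * complex_of_real \<omega>)"
proof -
  have "(LBINT t=ereal a..ereal b. wave \<omega> t) = wave \<omega> b / (\<i> * \<omega>) - wave \<omega> a / (\<i> * \<omega>)"
    using has_vector_derivative_at_within[OF wave_has_vector_derivative[OF assms]]
    by (intro interval_integral_FTC_finite continuous_on_wave)
  then show ?thesis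
    by (simp add: diff_divide_distrib)
qed

lemma interval_integral_complex_one:
  "(LBINT t=ereal a..ereal b. (1::complex)) = complex_of_real (b - a)"
  using interval_lebesgue_integral_of_real[of lborel a b "\<lambda>_. 1"] by simp

lemma interval_lebesgue_integrable_sum:
  fixes f :: "'i \<Rightarrow> real \<Rightarrow> 'a::{banach, second_countable_topology}"
  assumes "finite K" "\<And>k. k \<in> K \<Longrightarrow> interval_lebesgue_integrable lborel a b (f k)"
  shows "interval_lebesgue_integrable lborel a b (\<lambda>t. \<Sum>k\<in>K. f k t)"
  using assms
proof (induction K rule: finite_induct)
  case empty
  then show ?case
    by (simp add: interval_lebesgue_integrable_def set_integrable_def)
qed auto

lemma interval_lebesgue_integral_sum:
  fixes f :: "'i \<Rightarrow> real \<Rightarrow> 'a::{banach, second_countable_topology}"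
  assumes "finite K" "\<And>k. k \<in> K \<Longrightarrow> interval_lebesgue_integrable lborel a b (f k)"
  shows "(LBINT t=a..b. (\<Sum>k\<in>K. f k t)) = (\<Sum>k\<in>K. LBINT t=a..b. f k t)"
  using assms by (induction K rule: finite_induct) (auto simp: interval_lebesgue_integrable_sum)

lemma quasi_periodic_iff_wave_sum:
  "quasi_periodic h \<longleftrightarrow> (\<exists>S c. finite S \<and> h = (\<lambda>t. \<Sum>\<omega>\<in>S. c \<omega> * wave \<omega> t))"
  by (auto simp: quasi_periodic_def wave_def fun_eq_iff)

lemma quasi_periodic_wave_sum:
  assumes "finite A"
  shows "quasi_periodic (\<lambda>t. \<Sum>x\<in>A. c x * wave (\<omega> x) t)"
proof -
  let ?coef = "\<lambda>\<eta>. \<Sum>x\<in>{x\<in>A. \<omega> x = \<eta>}. c x"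
  have "(\<Sum>x\<in>A. c x * wave (\<omega> x) t) = (\<Sum>\<eta>\<in>\<omega> ` A. ?coef \<eta> * wave \<eta> t)" for t
    unfolding sum.image_gen[OF assms, of "\<lambda>x. c x * wave (\<omega> x) t" \<omega>] sum_distrib_right
    by (intro sum.cong) auto
  then show ?thesis
    unfolding quasi_periodic_iff_wave_sum using assms
    by (intro exI[of _ "\<omega> ` A"] exI[of _ ?coef]) auto
qed

lemma quasi_periodic_const: "quasi_periodic (\<lambda>t. c)"
  using quasi_periodic_wave_sum[of "{()}" "\<lambda>_. c" "\<lambda>_. 0"] by simp

lemma quasi_periodic_wave: "quasi_periodic (\<lambda>t. c * wave \<omega> t)"
  using quasi_periodic_wave_sum[of "{()}" "\<lambda>_. c" "\<lambda>_. \<omega>"] by simp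

lemma quasi_periodic_add:
  assumes "quasi_periodic f" "quasi_periodic g"
  shows "quasi_periodic (\<lambda>t. f t + g t)"
proof -
  obtain S c T d where "finite S" "finite T"
    and "f = (\<lambda>t. \<Sum>\<omega>\<in>S. c \<omega> * wave \<omega> t)" "g = (\<lambda>t. \<Sum>\<omega>\<in>T. d \<omega> * wave \<omega> t)"
    using assms unfolding quasi_periodic_iff_wave_sum by blast
  then have "(\<lambda>t. f t + g t) = (\<lambda>t. \<Sum>x\<in>S <+> T. case_sum c d x * wave (case_sum id id x) t)"
    by (simp add: sum.Plus)
  with \<open>finite S\<close> \<open>finite T\<close> show ?thesis
    by (simp add: quasi_periodic_wave_sum)
qed

lemma quasi_periodic_mult:
  assumes "quasi_periodic f" "quasi_periodic g"
  shows "quasi_periodic (\<lambda>t. f t * g t)"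
proof -
  obtain S c T d where "finite S" "finite T"
    and "f = (\<lambda>t. \<Sum>\<omega>\<in>S. c \<omega> * wave \<omega> t)" "g = (\<lambda>t. \<Sum>\<omega>\<in>T. d \<omega> * wave \<omega> t)"
    using assms unfolding quasi_periodic_iff_wave_sum by blast
  then have "(\<lambda>t. f t * g t)
      = (\<lambda>t. \<Sum>(\<omega>, \<eta>)\<in>S \<times> T. (c \<omega> * d \<eta>) * wave (\<omega> + \<eta>) t)"
    by (simp add: sum_product sum.cartesian_product wave_add mult_ac)
  with \<open>finite S\<close> \<open>finite T\<close> show ?thesis
    using quasi_periodic_wave_sum[of "S \<times> T" "\<lambda>(\<omega>, \<eta>). c \<omega> * d \<eta>" "\<lambda>(\<omega>, \<eta>). \<omega> + \<eta>"]
    by (simp add: split_beta')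
qed

lemma continuous_on_quasi_periodic:
  assumes "quasi_periodic h"
  shows "continuous_on A h"
  using assms continuous_on_wave
  unfolding quasi_periodic_iff_wave_sum by (auto intro!: continuous_intros)

lemma interval_integrable_quasi_periodic:
  assumes "quasi_periodic h"
  shows "interval_lebesgue_integrable lborel (ereal a) (ereal b) h"
  using continuous_on_quasi_periodic[OF assms, of UNIV]
  by (simp add: interval_integrable_isCont continuous_on_eq_continuous_at)

definition time_average :: "(real \<Rightarrow> complex) \<Rightarrow> real \<Rightarrow> complex" where
  "time_average h T = (1 / (2 * complex_of_real T)) * (LBINT t=-T..T. h t)"

lemma mean_eq_Lim_time_average: "mean h = Lim at_top (time_average h)"
  by (simp add: mean_def time_average_def[abs_def])

lemma norm_time_average_wave_le:
  assumes "\<omega> \<noteq> 0" "T > 0"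
  shows "norm (time_average (wave \<omega>) T) \<le> 1 / (\<bar>\<omega>\<bar> * T)"
proof -
  have "norm (wave \<omega> T - wave \<omega> (-T)) \<le> 2"
    using norm_triangle_ineq4[of "wave \<omega> T" "wave \<omega> (-T)"] by simp
  have "norm (time_average (wave \<omega>) T) = norm (wave \<omega> T - wave \<omega> (-T)) / (2 * T * \<bar>\<omega>\<bar>)"
    using assms by (simp add: time_average_def interval_integral_wave norm_mult norm_divide)
  also have "\<dots> \<le> 2 / (2 * T * \<bar>\<omega>\<bar>)"
    using assms \<open>norm (wave \<omega> T - wave \<omega> (-T)) \<le> 2\<close> by (intro divide_right_mono) auto
  also have "\<dots> = 1 / (\<bar>\<omega>\<bar> * T)"
    by simp
  finally show ?thesis .
qed

lemma time_average_wave_tendsto: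
  "(time_average (wave \<omega>) \<longlongrightarrow> (if \<omega> = 0 then 1 else 0)) at_top"
proof (cases "\<omega> = 0")
  case True
  have "eventually (\<lambda>T. time_average (wave \<omega>) T = 1) at_top"
    using eventually_gt_at_top[of 0]
    by eventually_elim (simp add: True time_average_def interval_integral_complex_one)
  then show ?thesis
    using True by (simp add: tendsto_eventually)
next
  case False
  have "eventually (\<lambda>T. norm (time_average (wave \<omega>) T) \<le> 1 / (\<bar>\<omega>\<bar> * T)) at_top"
    using eventually_gt_at_top[of 0]
    by eventually_elim (rule norm_time_average_wave_le[OF False])
  moreover have "((\<lambda>T. 1 / (\<bar>\<omega>\<bar> * T)) \<longlongrightarrow> 0) at_top"
    using False by real_asymp
  ultimately show ?thesis
    using False by (simp add: Lim_null_comparison)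
qed

lemma time_average_sum:
  assumes "finite K" "\<And>k. k \<in> K \<Longrightarrow> quasi_periodic (f k)"
  shows "time_average (\<lambda>t. \<Sum>k\<in>K. f k t) T = (\<Sum>k\<in>K. time_average (f k) T)"
  using interval_lebesgue_integral_sum[OF assms(1) interval_integrable_quasi_periodic[OF assms(2)]]
  by (simp add: time_average_def sum_distrib_left)

lemma time_average_wave_sum_tendsto:
  assumes "finite S"
  shows "(time_average (\<lambda>t. \<Sum>\<omega>\<in>S. c \<omega> * wave \<omega> t) \<longlongrightarrow> (if 0 \<in> S then c 0 else 0)) at_top"
proof -
  have "time_average (\<lambda>t. \<Sum>\<omega>\<in>S. c \<omega> * wave \<omega> t)
      = (\<lambda>T. \<Sum>\<omega>\<in>S. c \<omega> * time_average (wave \<omega>) T)"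
    by (simp add: fun_eq_iff time_average_sum[OF assms] quasi_periodic_wave)
      (simp add: time_average_def)
  moreover have "((\<lambda>T. \<Sum>\<omega>\<in>S. c \<omega> * time_average (wave \<omega>) T)
      \<longlongrightarrow> (\<Sum>\<omega>\<in>S. c \<omega> * (if \<omega> = 0 then 1 else 0))) at_top"
    by (intro tendsto_sum tendsto_mult_left time_average_wave_tendsto)
  moreover have "(\<Sum>\<omega>\<in>S. c \<omega> * (if \<omega> = 0 then 1 else 0)) = (if 0 \<in> S then c 0 else 0)"
    unfolding sum.delta[OF assms, of 0 c, symmetric] by (intro sum.cong) auto
  ultimately show ?thesis
    by simp
qed

lemma mean_wave_sum:
  assumes "finite S"
  shows "mean (\<lambda>t. \<Sum>\<omega>\<in>S. c \<omega> * wave \<omega> t) = (if 0 \<in> S then c 0 else 0)"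
  unfolding mean_eq_Lim_time_average
  by (rule tendsto_Lim[OF trivial_limit_at_top_linorder time_average_wave_sum_tendsto[OF assms]])

lemma time_average_tendsto_mean:
  assumes "quasi_periodic h"
  shows "(time_average h \<longlongrightarrow> mean h) at_top"
proof -
  obtain S c where "finite S" "h = (\<lambda>t. \<Sum>\<omega>\<in>S. c \<omega> * wave \<omega> t)"
    using assms unfolding quasi_periodic_iff_wave_sum by blast
  then show ?thesis
    by (simp add: time_average_wave_sum_tendsto mean_wave_sum)
qed

lemma mean_sum:
  assumes "finite K" "\<And>k. k \<in> K \<Longrightarrow> quasi_periodic (f k)"
  shows "mean (\<lambda>t. \<Sum>k\<in>K. f k t) = (\<Sum>k\<in>K. mean (f k))"
proof -
  have "time_average (\<lambda>t. \<Sum>k\<in>K. f k t) = (\<lambda>T. \<Sum>k\<in>K. time_average (f k) T)"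
    using time_average_sum[OF assms] by (rule ext)
  moreover have "((\<lambda>T. \<Sum>k\<in>K. time_average (f k) T) \<longlongrightarrow> (\<Sum>k\<in>K. mean (f k))) at_top"
    using assms(2) by (intro tendsto_sum time_average_tendsto_mean)
  ultimately show ?thesis
    unfolding mean_eq_Lim_time_average[of "\<lambda>t. \<Sum>k\<in>K. f k t"] by (intro tendsto_Lim) auto
qed

lemma quasi_periodic_centred_primitive:
  assumes "quasi_periodic g"
  shows "quasi_periodic (\<lambda>t. LBINT \<tau>=0..t. g \<tau> - mean g)"
proof -
  obtain S c where S: "finite S" and g: "g = (\<lambda>t. \<Sum>\<omega>\<in>S. c \<omega> * wave \<omega> t)"
    using assms unfolding quasi_periodic_iff_wave_sum by blast
  let ?S = "S - {0}" and ?d = "\<lambda>\<omega>. c \<omega> / (\<i> * complex_of_real \<omega>)"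
  have centred: "g \<tau> - mean g = (\<Sum>\<omega>\<in>?S. c \<omega> * wave \<omega> \<tau>)" for \<tau>
    using S by (simp add: g mean_wave_sum sum.remove)
  have primitive: "(LBINT \<tau>=0..t. g \<tau> - mean g)
      = (\<Sum>\<omega>\<in>?S. ?d \<omega> * wave \<omega> t) + (- (\<Sum>\<omega>\<in>?S. ?d \<omega>))" for t :: real
  proof -
    have "(LBINT \<tau>=ereal 0..ereal t. g \<tau> - mean g)
        = (\<Sum>\<omega>\<in>?S. c \<omega> * (LBINT \<tau>=ereal 0..ereal t. wave \<omega> \<tau>))"
      unfolding centred using S
      by (subst interval_lebesgue_integral_sum)
        (auto intro: interval_integrable_quasi_periodic quasi_periodic_wave)
    also have "\<dots> = (\<Sum>\<omega>\<in>?S. ?d \<omega> * wave \<omega> t) + (- (\<Sum>\<omega>\<in>?S. ?d \<omega>))"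
      by (simp add: interval_integral_wave field_simps sum_subtractf[symmetric] sum_distrib_left)
    finally show ?thesis
      by (simp add: zero_ereal_def)
  qed
  have "quasi_periodic (\<lambda>t. (\<Sum>\<omega>\<in>?S. ?d \<omega> * wave \<omega> t) + (- (\<Sum>\<omega>\<in>?S. ?d \<omega>)))"
    using S by (intro quasi_periodic_add quasi_periodic_wave_sum quasi_periodic_const) simp
  then show ?thesis
    unfolding primitive .
qed

lemma renorm_Cons:
  "as \<noteq> [] \<Longrightarrow>
    renorm (a # as) = (\<lambda>t. a t * (LBINT \<tau>=0..t. renorm as \<tau> - mean (renorm as)))"
  by (cases as) auto

lemma quasi_periodic_renorm:
  "as \<noteq> [] \<Longrightarrow> (\<And>f. f \<in> set as \<Longrightarrow> quasi_periodic f) \<Longrightarrow> quasi_periodic (renorm as)"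
proof (induction as rule: renorm.induct)
  case (3 a b as)
  then show ?case
    by (simp add: quasi_periodic_mult quasi_periodic_centred_primitive)
qed auto

lemma renorm_append_renorm: "renorm (as @ [renorm (b # c # cs)]) = renorm (as @ b # c # cs)"
  by (induction as) (simp_all add: renorm_Cons)

lemma renorm_append_sum:
  assumes "finite K" "\<And>f. f \<in> set as \<Longrightarrow> quasi_periodic f"
    and "\<And>k. k \<in> K \<Longrightarrow> quasi_periodic (g k)"
  shows "renorm (as @ [(\<lambda>t. \<Sum>k\<in>K. g k t)]) = (\<lambda>t. \<Sum>k\<in>K. renorm (as @ [g k]) t)"
  using assms(2)
proof (induction as)
  case (Cons a as)
  define G where "G k = renorm (as @ [g k])" for k
  have G: "quasi_periodic (G k)" if "k \<in> K" for k
    unfolding G_def using Cons.prems assms(3) that by (intro quasi_periodic_renorm) auto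
  have "(LBINT \<tau>=ereal 0..ereal t. (\<Sum>k\<in>K. G k \<tau>) - mean (\<lambda>\<tau>. \<Sum>k\<in>K. G k \<tau>))
      = (\<Sum>k\<in>K. LBINT \<tau>=ereal 0..ereal t. G k \<tau> - mean (G k))" for t
    using G
    by (simp add: mean_sum[OF assms(1)] interval_lebesgue_integral_sum[OF assms(1)]
        sum_subtractf[symmetric] interval_integrable_quasi_periodic quasi_periodic_const)
  then show ?case
    using Cons by (simp add: renorm_Cons G_def[symmetric] sum_distrib_left zero_ereal_def)
qed simp

theorem corollary3p6:
  fixes a b c :: "nat \<Rightarrow> real \<Rightarrow> complex" and n m :: nat
  assumes "n \<ge> 1" and "m \<ge> 1"
    and "\<forall>i\<in>{1..<n}. quasi_periodic (a i)"
    and "\<forall>k\<in>{1..m}. quasi_periodic (b k)"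
    and "\<forall>k\<in>{1..m}. quasi_periodic (c k)"
  shows "renorm (map a [1..<n] @ [(\<lambda>t. \<Sum>k=1..m. renorm [b k, c k] t)])
       = (\<lambda>t. \<Sum>k=1..m. renorm (map a [1..<n] @ [b k, c k]) t)"
proof -
  have "quasi_periodic (renorm [b k, c k])" if "k \<in> {1..m}" for k
    using assms(4,5) that by (intro quasi_periodic_renorm) auto
  then have "renorm (map a [1..<n] @ [(\<lambda>t. \<Sum>k=1..m. renorm [b k, c k] t)])
      = (\<lambda>t. \<Sum>k=1..m. renorm (map a [1..<n] @ [renorm [b k, c k]]) t)"
    using assms(3) by (intro renorm_append_sum) auto
  then show ?thesis
    using renorm_append_renorm[where cs = "[]"] by simp
qed

end
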